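(* Assume $V$ satisfies Assumptions A1 and A2, let $\delta$ satisfy the step-size condition (S), and let $c=(1-\gamma\delta/2)/(1-\gamma\delta)$. For the underdamped Langevin algorithm with step size $\delta$, let $\tau_k=(1-\gamma\delta)\rho_k-\delta\nabla V(\xi_k)$. Then there exist constants $\varepsilon=\varepsilon(\delta)>0$ and $C_1=C_1(\delta)>0$ such that for all $k\ge0$ (almost surely), \[ \Gamma_c(\xi_{k+1},\tau_k)\le(1-\varepsilon\gamma\delta)\,\Gamma_c(\xi_k,\rho_k)+C_1 . \]
   Context: Fix integers $r\ge1$ and a constant $\gamma>0$. A map has polynomial growth if $\Vert\phi(x)\Vert\le C(1+\Vert x\Vert^m)$ for some $C>0$, integer $m\ge0$ and all $x$; $\mathscr{C}^\infty_{poly}$ denotes infinitely differentiable maps with the map and all derivatives of polynomial growth. Norms of matrices are operator norms. Assumption A1: (a) $V(x)\ge0$ for all $x\in\mathbb{R}^r$; (b) $\Vert\nabla^2V(x)\Vert\le\nu$ for some constant $\nu>0$ and all $x$; (c) $V\in\mathscr{C}^\infty_{poly}$. Assumption A2: there exist constants $\alpha>0$ and $0<\beta<1$ such that for all $x\in\mathbb{R}^r$, $\frac12\langle\nabla V(x),x\rangle\ge\beta V(x)+\gamma^2C_\beta\Vert x\Vert^2-\alpha$, where $C_\beta=\frac{\beta(2-\beta)}{8(1-\beta)}$. Step-size condition (S): $0<\delta\le\min\{1/\gamma,\ \gamma/(2\nu),\ (D+1-\sqrt{D^2+1})/\gamma\}$ with $D=\gamma^4C_\beta/\nu^2$. Underdamped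 Langevin algorithm: $\xi_{k+1}=\xi_k+\delta\rho_k$, $\rho_{k+1}=(1-\gamma\delta)\rho_k-\delta\nabla V(\xi_k)+\sqrt{2\gamma\delta}\,\eta_k$, where $\eta_0,\eta_1,\dots$ are i.i.d. $N(0,I_r)$ and $\eta_k$ is independent of $(\xi_j,\rho_j)_{j\le k}$; the initial values $\xi_0,\rho_0$ are deterministic. For $c>1$ and $x,y\in\mathbb{R}^r$, $\Gamma_c(x,y)=\frac{\gamma^2}{4}\Vert x\Vert^2+V(x)+\frac{\gamma}{2}\langle x,y\rangle+\frac c2\Vert y\Vert^2+1$. *)

theory Defs
  imports "HOL-Analysis.Analysis"
begin

definition poly_growth :: "('a::real_normed_vector \<Rightarrow> real) \<Rightarrow> bool" where
  "poly_growth f \<longleftrightarrow> (\<exists>C>0. \<exists>m::nat. \<forall>x. \<bar>f x\<bar> \<le> C * (1 + norm x ^ m))"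

text \<open>C-infinity-poly: all mixed partial derivatives of all orders exist
  (as Frechet derivatives; D (j # is) is the partial derivative in direction j
  of D is) and all of them, including the map itself, have polynomial growth.\<close>
definition smooth_poly :: "(real^'n \<Rightarrow> real) \<Rightarrow> bool" where
  "smooth_poly V \<longleftrightarrow> (\<exists>D :: 'n list \<Rightarrow> real^'n \<Rightarrow> real.
      D [] = V \<and>
      (\<forall>is x. (D is has_derivative (\<lambda>h. \<Sum>j\<in>UNIV. D (j # is) x * h $ j)) (at x)) \<and>
      (\<forall>is. poly_growth (D is)))"

definition C_beta :: "real \<Rightarrow> real" where
  "C_beta \<beta> = \<beta> * (2 - \<beta>) / (8 * (1 - \<beta>))"

definition Gamma_c :: "real \<Rightarrow> (real^'n \<Rightarrow> real) \<Rightarrow> real \<Rightarrow> real^'n \<Rightarrow> real^'n \<Rightarrow> real" where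
  "Gamma_c \<gamma> V c x y = \<gamma>\<^sup>2 / 4 * (norm x)\<^sup>2 + V x + \<gamma> / 2 * (x \<bullet> y) + c / 2 * (norm y)\<^sup>2 + 1"

text \<open>Underdamped Langevin algorithm, for a given realisation eta of the noise.\<close>
primrec ula :: "real \<Rightarrow> real \<Rightarrow> (real^'n \<Rightarrow> real^'n) \<Rightarrow> real^'n \<Rightarrow> real^'n
                 \<Rightarrow> (nat \<Rightarrow> real^'n) \<Rightarrow> nat \<Rightarrow> (real^'n) \<times> (real^'n)" where
  "ula \<gamma> \<delta> gradV \<xi>0 \<rho>0 \<eta> 0 = (\<xi>0, \<rho>0)"
| "ula \<gamma> \<delta> gradV \<xi>0 \<rho>0 \<eta> (Suc k) =
     (let (\<xi>, \<rho>) = ula \<gamma> \<delta> gradV \<xi>0 \<rho>0 \<eta> k in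
       (\<xi> + \<delta> *\<^sub>R \<rho>,
        (1 - \<gamma> * \<delta>) *\<^sub>R \<rho> - \<delta> *\<^sub>R gradV \<xi> + sqrt (2 * \<gamma> * \<delta>) *\<^sub>R \<eta> k))"

end

theory Submission
  imports Defs
begin

text \<open>With \<open>a = \<gamma>\<delta>\<close>, the choice \<open>c (1 - a) = 1 - a/2\<close> makes every cross term
  \<open>\<langle>p, \<nabla>V x\<rangle>\<close> in \<open>\<Gamma>\<^sub>c\<close> after one step cancel against the first-order term of the descent
  lemma \<open>V (x + h) \<le> V x + \<langle>\<nabla>V x, h\<rangle> + \<nu>|h|\<^sup>2/2\<close>.  What remains is
  \<open>\<Gamma>\<^sub>c(x,p) - (ac - \<nu>\<delta>\<^sup>2)|p|\<^sup>2/2 - a\<langle>x,\<nabla>V x\<rangle>/2 + c\<delta>\<^sup>2|\<nabla>V x|\<^sup>2/2\<close>.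
  The drift condition A2 turns \<open>\<langle>x,\<nabla>V x\<rangle>\<close> into a negative multiple of \<open>V x + |x|\<^sup>2\<close>,
  Lipschitz continuity of \<open>\<nabla>V\<close> bounds \<open>|\<nabla>V x|\<^sup>2\<close> by \<open>|x|\<^sup>2\<close>, and the step-size conditions
  make the resulting coefficients of \<open>|x|\<^sup>2\<close>, \<open>V x\<close> and \<open>|p|\<^sup>2\<close> dominate a fixed fraction
  of \<open>\<Gamma>\<^sub>c(x,p)\<close>, which by Cauchy-Schwarz is at most a combination of these three.\<close>

lemma descent_lemma:
  fixes V :: "'a::real_inner \<Rightarrow> real" and gradV :: "'a \<Rightarrow> 'a"
  assumes grad: "\<And>x. (V has_derivative (\<lambda>h. gradV x \<bullet> h)) (at x)"
    and lip: "\<And>x y. norm (gradV x - gradV y) \<le> \<nu> * norm (x - y)"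
  shows "V (x + h) \<le> V x + gradV x \<bullet> h + \<nu>/2 * (norm h)\<^sup>2"
proof -
  define f where "f t = V (x + t *\<^sub>R h) - t * (gradV x \<bullet> h) - \<nu>/2 * t\<^sup>2 * (norm h)\<^sup>2" for t
  have dV: "((\<lambda>t. V (x + t *\<^sub>R h)) has_derivative (\<lambda>u. gradV (x + t *\<^sub>R h) \<bullet> (u *\<^sub>R h)))
      (at t within {0..1})" for t
  proof -
    have "((\<lambda>t. x + t *\<^sub>R h) has_derivative (\<lambda>u. u *\<^sub>R h)) (at t within {0..1})"
      by (auto intro!: derivative_eq_intros)
    from has_derivative_compose[OF this grad] show ?thesis by simp
  qed
  have df: "(f has_derivative (\<lambda>u. u * (gradV (x + t *\<^sub>R h) \<bullet> h - gradV x \<bullet> h - \<nu> * t * (norm h)\<^sup>2)))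
      (at t within {0..1})" for t
    unfolding f_def
    by (rule has_derivative_eq_rhs, (rule derivative_intros dV)+)
       (auto simp: algebra_simps fun_eq_iff power2_eq_square)
  then obtain t where t: "t \<in> {0..1}"
    and mvt: "f 1 - f 0 = (gradV (x + t *\<^sub>R h) - gradV x) \<bullet> h - \<nu> * t * (norm h)\<^sup>2"
    using mvt_very_simple[of 0 1 f, OF _ df] by (auto simp: inner_diff_left)
  have "(gradV (x + t *\<^sub>R h) - gradV x) \<bullet> h \<le> norm (gradV (x + t *\<^sub>R h) - gradV x) * norm h"
    by (rule norm_cauchy_schwarz)
  also have "\<dots> \<le> \<nu> * norm (t *\<^sub>R h) * norm h"
    using lip[of "x + t *\<^sub>R h" x] by (intro mult_right_mono) auto
  also have "\<dots> = \<nu> * t * (norm h)\<^sup>2"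
    using t by (simp add: power2_eq_square)
  finally have "f 1 \<le> f 0" using mvt by simp
  then show ?thesis unfolding f_def by simp
qed

lemma norm_gradient_sq_le:
  fixes gradV :: "'a::real_normed_vector \<Rightarrow> 'b::real_normed_vector"
  assumes lip: "\<And>x y. norm (gradV x - gradV y) \<le> \<nu> * norm (x - y)"
  shows "(norm (gradV x))\<^sup>2 \<le> 3 * (norm (gradV 0))\<^sup>2 + 3/2 * \<nu>\<^sup>2 * (norm x)\<^sup>2"
proof -
  have "norm (gradV x) \<le> norm (gradV 0) + \<nu> * norm x"
    using lip[of x 0] norm_triangle_ineq2[of "gradV x" "gradV 0"] by simp
  then have "(norm (gradV x))\<^sup>2 \<le> (norm (gradV 0) + \<nu> * norm x)\<^sup>2"
    by (intro power_mono) auto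
  also have "\<dots> \<le> 3 * (norm (gradV 0))\<^sup>2 + 3/2 * (\<nu> * norm x)\<^sup>2"
    using zero_le_power2[of "2 * norm (gradV 0) - \<nu> * norm x"]
    by (simp add: power2_diff power2_sum power_mult_distrib)
  finally show ?thesis by (simp add: power_mult_distrib)
qed

lemma Gamma_c_le:
  "Gamma_c \<gamma> V c x y \<le> \<gamma>\<^sup>2/2 * (norm x)\<^sup>2 + V x + (c/2 + 1/4) * (norm y)\<^sup>2 + 1"
proof -
  have "0 \<le> (norm (\<gamma> *\<^sub>R x - y))\<^sup>2" by simp
  then have "2 * \<gamma> * (x \<bullet> y) \<le> \<gamma>\<^sup>2 * (norm x)\<^sup>2 + (norm y)\<^sup>2"
    unfolding power2_norm_eq_inner
    by (simp add: inner_diff_left inner_diff_right inner_commute power2_eq_square algebra_simps)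
  then show ?thesis unfolding Gamma_c_def by (simp add: algebra_simps)
qed

lemma Gamma_c_langevin_step_le:
  fixes x p g :: "real^'n"
  assumes c: "c * (1 - \<gamma> * \<delta>) = 1 - \<gamma> * \<delta> / 2"
    and descent: "V (x + \<delta> *\<^sub>R p) \<le> V x + \<delta> * (g \<bullet> p) + \<nu>/2 * \<delta>\<^sup>2 * (norm p)\<^sup>2"
  shows "Gamma_c \<gamma> V c (x + \<delta> *\<^sub>R p) ((1 - \<gamma> * \<delta>) *\<^sub>R p - \<delta> *\<^sub>R g)
    \<le> Gamma_c \<gamma> V c x p - (\<gamma> * \<delta> * c - \<nu> * \<delta>\<^sup>2) / 2 * (norm p)\<^sup>2
       - \<gamma> * \<delta> / 2 * (x \<bullet> g) + c * \<delta>\<^sup>2 / 2 * (norm g)\<^sup>2"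
proof -
  define a where "a = \<gamma> * \<delta>"
  define r where "r = 1 - a/2 - c * (1 - a)"
  have r0: "r = 0" using c unfolding r_def a_def by simp
  \<comment> \<open>Exact expansion; the defect \<open>r\<close> of the relation defining \<open>c\<close> multiplies the
    only terms that do not cancel.\<close>
  have "Gamma_c \<gamma> V c (x + \<delta> *\<^sub>R p) ((1 - \<gamma> * \<delta>) *\<^sub>R p - \<delta> *\<^sub>R g)
      - (Gamma_c \<gamma> V c x p - (a * c - \<nu> * \<delta>\<^sup>2) / 2 * (norm p)\<^sup>2 - a / 2 * (x \<bullet> g)
         + c * \<delta>\<^sup>2 / 2 * (norm g)\<^sup>2)
    = (V (x + \<delta> *\<^sub>R p) - V x - \<delta> * (g \<bullet> p) - \<nu>/2 * \<delta>\<^sup>2 * (norm p)\<^sup>2)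
      + r * (\<delta> * (g \<bullet> p) + a/2 * (norm p)\<^sup>2)"
    unfolding Gamma_c_def r_def a_def power2_norm_eq_inner
    by (simp add: inner_add_left inner_add_right inner_diff_left inner_diff_right
        inner_commute power2_eq_square field_simps)
  then show ?thesis using descent r0 unfolding a_def by (simp add: mult.assoc)
qed

lemma step_size_condition_bounds:
  fixes \<gamma> \<nu> Cb \<delta> :: real
  defines "D \<equiv> \<gamma>^4 * Cb / \<nu>\<^sup>2"
    and "c \<equiv> (1 - \<gamma> * \<delta> / 2) / (1 - \<gamma> * \<delta>)"
  assumes "\<gamma> > 0" "\<nu> > 0" "Cb > 0" "\<delta> > 0"
    and step: "\<delta> \<le> (D + 1 - sqrt (D\<^sup>2 + 1)) / \<gamma>"
  shows "\<gamma> * \<delta> < 1" and "c * \<delta>\<^sup>2 * \<nu>\<^sup>2 \<le> \<gamma> * \<delta> * \<gamma>\<^sup>2 * Cb"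
proof -
  define a where "a = \<gamma> * \<delta>"
  have D_pos: "D > 0" using assms unfolding D_def by simp
  have a_le: "a \<le> D + 1 - sqrt (D\<^sup>2 + 1)"
    using step \<open>\<gamma> > 0\<close> unfolding a_def by (simp add: pos_le_divide_eq mult.commute)
  have "D < sqrt (D\<^sup>2 + 1)"
    using D_pos by (simp add: real_less_rsqrt)
  then show a_lt: "\<gamma> * \<delta> < 1" using a_le unfolding a_def by linarith
  have "D\<^sup>2 + 1 \<le> (D + 1 - a)\<^sup>2"
    using a_le power_mono[of "sqrt (D\<^sup>2 + 1)" "D + 1 - a" 2] by simp
  then have "a * (2 - a) \<le> 2 * D * (1 - a)"
    by (simp add: power2_eq_square algebra_simps)
  then have "a * c \<le> D"
    using a_lt \<open>\<delta> > 0\<close> unfolding c_def a_def[symmetric] by (simp add: field_simps)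
  then have "\<gamma> * \<delta> * c * \<nu>\<^sup>2 \<le> \<gamma>^4 * Cb"
    using \<open>\<nu> > 0\<close> unfolding a_def D_def by (simp add: pos_le_divide_eq)
  then have "(\<delta> / \<gamma>) * (\<gamma> * \<delta> * c * \<nu>\<^sup>2) \<le> (\<delta> / \<gamma>) * (\<gamma>^4 * Cb)"
    using \<open>\<gamma> > 0\<close> \<open>\<delta> > 0\<close> by (intro mult_left_mono) auto
  then show "c * \<delta>\<^sup>2 * \<nu>\<^sup>2 \<le> \<gamma> * \<delta> * \<gamma>\<^sup>2 * Cb"
    using \<open>\<gamma> > 0\<close> by (simp add: power2_eq_square power4_eq_xxxx field_simps)
qed

lemma Gamma_c_langevin_step_contraction:
  fixes V :: "real^'n \<Rightarrow> real" and gradV :: "real^'n \<Rightarrow> real^'n" and x p :: "real^'n"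
  assumes "\<gamma> > 0" "\<delta> > 0"
    and grad: "\<And>x. (V has_derivative (\<lambda>h. gradV x \<bullet> h)) (at x)"
    and lip: "\<And>x y. norm (gradV x - gradV y) \<le> \<nu> * norm (x - y)"
    and V_nonneg: "\<And>x. V x \<ge> 0"
    and drift: "\<And>x. 1/2 * (gradV x \<bullet> x) \<ge> \<beta> * V x + \<gamma>\<^sup>2 * Cb * (norm x)\<^sup>2 - \<alpha>"
    and c: "c * (1 - \<gamma> * \<delta>) = 1 - \<gamma> * \<delta> / 2" "c \<ge> 1"
    and step: "c * \<delta>\<^sup>2 * \<nu>\<^sup>2 \<le> \<gamma> * \<delta> * \<gamma>\<^sup>2 * Cb" "2 * \<nu> * \<delta> \<le> \<gamma>"
    and \<epsilon>: "0 \<le> \<epsilon>" "\<epsilon> \<le> \<beta>" "\<epsilon> \<le> Cb / 2" "\<epsilon> \<le> 1/3"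
  shows "Gamma_c \<gamma> V c (x + \<delta> *\<^sub>R p) ((1 - \<gamma> * \<delta>) *\<^sub>R p - \<delta> *\<^sub>R gradV x)
    \<le> (1 - \<epsilon> * \<gamma> * \<delta>) * Gamma_c \<gamma> V c x p
       + (\<gamma> * \<delta> * (1 + \<alpha>) + 3/2 * c * \<delta>\<^sup>2 * (norm (gradV 0))\<^sup>2)"
proof -
  define a where "a = \<gamma> * \<delta>"
  define X where "X = (norm x)\<^sup>2"
  define P where "P = (norm p)\<^sup>2"
  define G where "G = (norm (gradV 0))\<^sup>2"
  define \<Gamma> where "\<Gamma> = Gamma_c \<gamma> V c x p"
  have a_pos: "a > 0" unfolding a_def using assms by simp
  have descent: "V (x + \<delta> *\<^sub>R p) \<le> V x + \<delta> * (gradV x \<bullet> p) + \<nu>/2 * \<delta>\<^sup>2 * P"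
    using descent_lemma[OF grad lip, of x "\<delta> *\<^sub>R p"] \<open>\<delta> > 0\<close>
    unfolding P_def by (simp add: power_mult_distrib)
  have "Gamma_c \<gamma> V c (x + \<delta> *\<^sub>R p) ((1 - \<gamma> * \<delta>) *\<^sub>R p - \<delta> *\<^sub>R gradV x)
      \<le> \<Gamma> - (a * c - \<nu> * \<delta>\<^sup>2) / 2 * P - a * (1/2 * (gradV x \<bullet> x))
         + c * \<delta>\<^sup>2 / 2 * (norm (gradV x))\<^sup>2"
    using Gamma_c_langevin_step_le[OF c(1) descent[unfolded P_def]]
    unfolding \<Gamma>_def a_def P_def by (simp add: inner_commute power_mult_distrib)
  also have "\<dots> \<le> \<Gamma> - a * c / 4 * P - a * (\<beta> * V x + \<gamma>\<^sup>2 * Cb * X - \<alpha>)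
         + c * \<delta>\<^sup>2 / 2 * (3 * G + 3/2 * \<nu>\<^sup>2 * X)"
  proof -
    have "\<nu> * \<delta>\<^sup>2 \<le> a * c / 2"
      using step(2) c(2) \<open>\<delta> > 0\<close> a_pos mult_right_mono[of "2 * \<nu> * \<delta>" \<gamma> \<delta>]
        mult_left_mono[of 1 c a] unfolding a_def by (simp add: power2_eq_square algebra_simps)
    then have "a * c / 4 * P \<le> (a * c - \<nu> * \<delta>\<^sup>2) / 2 * P"
      unfolding P_def by (intro mult_right_mono) auto
    moreover have "a * (\<beta> * V x + \<gamma>\<^sup>2 * Cb * X - \<alpha>) \<le> a * (1/2 * (gradV x \<bullet> x))"
      using drift[of x] a_pos unfolding X_def by simp
    moreover have "c * \<delta>\<^sup>2 / 2 * (norm (gradV x))\<^sup>2 \<le> c * \<delta>\<^sup>2 / 2 * (3 * G + 3/2 * \<nu>\<^sup>2 * X)"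
      using norm_gradient_sq_le[OF lip, of x] c(2) unfolding G_def X_def
      by (intro mult_left_mono) auto
    ultimately show ?thesis by linarith
  qed
  also have "\<dots> \<le> \<Gamma> - a * (c / 4 * P + \<beta> * V x + \<gamma>\<^sup>2 * Cb / 4 * X) + a * \<alpha> + 3/2 * c * \<delta>\<^sup>2 * G"
  proof -
    have "3/4 * (c * \<delta>\<^sup>2 * \<nu>\<^sup>2) * X \<le> 3/4 * (a * \<gamma>\<^sup>2 * Cb) * X"
      using step(1) unfolding a_def X_def by (intro mult_right_mono) auto
    then show ?thesis by (simp add: algebra_simps)
  qed
  also have "\<dots> \<le> \<Gamma> - a * (\<epsilon> * \<Gamma> - 1) + a * \<alpha> + 3/2 * c * \<delta>\<^sup>2 * G"
  proof -
    have "\<epsilon> * \<Gamma> \<le> \<epsilon> * (\<gamma>\<^sup>2/2 * X + V x + (c/2 + 1/4) * P + 1)"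
      using Gamma_c_le \<epsilon>(1) unfolding \<Gamma>_def X_def P_def by (intro mult_left_mono) auto
    also have "\<dots> \<le> \<gamma>\<^sup>2 * Cb / 4 * X + \<beta> * V x + c / 4 * P + 1"
    proof -
      have "\<epsilon> * (\<gamma>\<^sup>2/2 * X) \<le> Cb/2 * (\<gamma>\<^sup>2/2 * X)"
        using \<epsilon>(3) unfolding X_def by (intro mult_right_mono) auto
      moreover have "\<epsilon> * V x \<le> \<beta> * V x"
        using \<epsilon>(2) V_nonneg by (intro mult_right_mono) auto
      moreover have "\<epsilon> * ((c/2 + 1/4) * P) \<le> 1/3 * ((c/2 + 1/4) * P)"
        using \<epsilon>(4) c(2) unfolding P_def by (intro mult_right_mono) auto
      moreover have "1/3 * (c/2 + 1/4) * P \<le> c / 4 * P"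
        using c(2) unfolding P_def by (intro mult_right_mono) auto
      ultimately show ?thesis using \<epsilon>(4) by (simp add: algebra_simps)
    qed
    finally have "a * (\<epsilon> * \<Gamma>) \<le> a * (\<gamma>\<^sup>2 * Cb / 4 * X + \<beta> * V x + c / 4 * P + 1)"
      using a_pos by (intro mult_left_mono) auto
    then show ?thesis by (simp add: algebra_simps)
  qed
  finally show ?thesis unfolding \<Gamma>_def G_def a_def by (simp add: algebra_simps)
qed

theorem lemma1:
  fixes V :: "real^'n \<Rightarrow> real"
    and gradV :: "real^'n \<Rightarrow> real^'n"
    and H :: "real^'n \<Rightarrow> real^'n^'n"
    and \<gamma> \<nu> \<alpha> \<beta> \<delta> :: real
  assumes gamma_pos: "\<gamma> > 0"
    and grad: "\<And>x. (V has_derivative (\<lambda>h. gradV x \<bullet> h)) (at x)"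
    and hess: "\<And>x. (gradV has_derivative (\<lambda>h. H x *v h)) (at x)"
    and A1a: "\<And>x. V x \<ge> 0"
    and nu_pos: "\<nu> > 0"
    and A1b: "\<And>x. onorm (\<lambda>h. H x *v h) \<le> \<nu>"
    and A1c: "smooth_poly V"
    and alpha_pos: "\<alpha> > 0" and beta: "0 < \<beta>" "\<beta> < 1"
    and A2: "\<And>x. 1/2 * (gradV x \<bullet> x) \<ge> \<beta> * V x + \<gamma>\<^sup>2 * C_beta \<beta> * (norm x)\<^sup>2 - \<alpha>"
    and S: "0 < \<delta>" "\<delta> \<le> 1 / \<gamma>" "\<delta> \<le> \<gamma> / (2 * \<nu>)"
      "\<delta> \<le> (\<gamma>^4 * C_beta \<beta> / \<nu>\<^sup>2 + 1 - sqrt ((\<gamma>^4 * C_beta \<beta> / \<nu>\<^sup>2)\<^sup>2 + 1)) / \<gamma>"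
  shows "\<exists>\<epsilon>>0. \<exists>C1>0. \<forall>\<xi>0 \<rho>0 (\<eta> :: nat \<Rightarrow> real^'n) k.
           let c = (1 - \<gamma> * \<delta> / 2) / (1 - \<gamma> * \<delta>);
               (\<xi>, \<rho>) = ula \<gamma> \<delta> gradV \<xi>0 \<rho>0 \<eta> k;
               \<tau> = (1 - \<gamma> * \<delta>) *\<^sub>R \<rho> - \<delta> *\<^sub>R gradV \<xi>;
               \<xi>' = fst (ula \<gamma> \<delta> gradV \<xi>0 \<rho>0 \<eta> (Suc k))
           in Gamma_c \<gamma> V c \<xi>' \<tau> \<le> (1 - \<epsilon> * \<gamma> * \<delta>) * Gamma_c \<gamma> V c \<xi> \<rho> + C1"
proof -
  define Cb where "Cb = C_beta \<beta>"
  define c where "c = (1 - \<gamma> * \<delta> / 2) / (1 - \<gamma> * \<delta>)"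
  define \<epsilon> where "\<epsilon> = min \<beta> (min (Cb / 2) (1/3))"
  define C1 where "C1 = \<gamma> * \<delta> * (1 + \<alpha>) + 3/2 * c * \<delta>\<^sup>2 * (norm (gradV 0))\<^sup>2"
  have Cb_pos: "Cb > 0" using beta unfolding Cb_def C_beta_def by (auto intro!: divide_pos_pos)
  have lip: "norm (gradV x - gradV y) \<le> \<nu> * norm (x - y)" for x y
    by (rule differentiable_bound[where S=UNIV and f'="\<lambda>x h. H x *v h"]) (auto simp: hess A1b)
  have a_lt_1: "\<gamma> * \<delta> < 1" and step1: "c * \<delta>\<^sup>2 * \<nu>\<^sup>2 \<le> \<gamma> * \<delta> * \<gamma>\<^sup>2 * Cb"
    using step_size_condition_bounds[OF gamma_pos nu_pos Cb_pos S(1)] S(4)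
    unfolding c_def Cb_def by auto
  have c: "c * (1 - \<gamma> * \<delta>) = 1 - \<gamma> * \<delta> / 2" "c \<ge> 1"
    using a_lt_1 gamma_pos S(1) unfolding c_def by (auto simp: field_simps)
  have step2: "2 * \<nu> * \<delta> \<le> \<gamma>" using S(3) nu_pos by (simp add: le_divide_eq algebra_simps)
  have contraction: "Gamma_c \<gamma> V c (x + \<delta> *\<^sub>R p) ((1 - \<gamma> * \<delta>) *\<^sub>R p - \<delta> *\<^sub>R gradV x)
      \<le> (1 - \<epsilon> * \<gamma> * \<delta>) * Gamma_c \<gamma> V c x p + C1" for x p
    unfolding C1_def
    by (rule Gamma_c_langevin_step_contraction[OF gamma_pos S(1) grad lip A1a A2[folded Cb_def]
          c step1 step2]) (use beta Cb_pos in \<open>auto simp: \<epsilon>_def\<close>)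
  have "\<epsilon> > 0" using beta Cb_pos unfolding \<epsilon>_def by simp
  moreover have "C1 > 0" using gamma_pos S(1) alpha_pos c(2) unfolding C1_def
    by (intro add_pos_nonneg) auto
  ultimately show ?thesis
    using contraction unfolding c_def by (auto simp: Let_def split_beta)
qed

end
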